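(* Let $d\ge1$, $n\ge 2d+3$, and let $M$ be a missing $d$-face of $\mathcal{C}(\partial C_{2d+1}(n))$. Then $(\Delta_{2d+2})^{\le d}$ is a minor of $\mathcal{C}(\partial C_{2d+1}(n))^{\le d}\cup\{M\}$.
   Context: $\mathcal{C}(\partial C_{2d+1}(n))$ is the boundary complex of the cyclic $(2d+1)$-polytope on vertex set $[n]$; by Gale's evenness condition it is the simplicial complex on $[n]$ whose maximal simplices are the $(2d+1)$-element sets $S\subseteq[n]$ such that for all $i<j$ in $[n]\setminus S$ the number of elements of $S$ strictly between $i$ and $j$ is even. $K^{\le k}$ is the subcomplex of simplices of dimension at most $k$ (dimension of $F$ is $|F|-1$). A missing $k$-face of $K$ is a $(k+1)$-subset $M\subseteq V(K)$ with $M\notin K$ but all proper subsets of $M$ in $K$. $\Delta_m$ is the complex of all subsets of an $(m+1)$-element set. Minors (Nevo): a deletion replaces $K$ by a subcomplex; an admissible contraction identifies two distinct vertices $u,v$ of $K$ such that no missing $k$-face of $K$ with $k\le\dim K$ contains both $u$ and $v$, producing $L=\{F\in K: u\notin F\}\cup\{(F\setminus\{u\})\cup\{v\}: u\in F\in K\}$. $L$ is a minor of $K$ if it is obtained (up to isomorphism) from $K$ by a finite sequence of deletions and admissible contractions. *)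

theory Defs
  imports Main
begin

definition simplicial_complex :: "nat set set \<Rightarrow> bool" where
  "simplicial_complex K \<longleftrightarrow> finite K \<and> (\<forall>F\<in>K. finite F) \<and> (\<forall>F\<in>K. \<forall>G. G \<subseteq> F \<longrightarrow> G \<in> K)"

definition verts :: "nat set set \<Rightarrow> nat set" where
  "verts K = \<Union>K"

definition cdim :: "nat set set \<Rightarrow> int" where
  "cdim K = int (Max (card ` K)) - 1"

definition skeleton :: "nat \<Rightarrow> nat set set \<Rightarrow> nat set set" where
  "skeleton k K = {F \<in> K. card F \<le> k + 1}"

definition missing_face :: "nat set set \<Rightarrow> nat \<Rightarrow> nat set \<Rightarrow> bool" where
  "missing_face K k M \<longleftrightarrow> M \<subseteq> verts K \<and> card M = k + 1 \<and> M \<notin> K \<and> (\<forall>G. G \<subset> M \<longrightarrow> G \<in> K)"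

definition simplex :: "nat \<Rightarrow> nat set set" where
  "simplex m = Pow {0..m}"

(* Gale's evenness condition: maximal simplices of the boundary of C_{2d+1}(n) *)
definition gale_facet :: "nat \<Rightarrow> nat \<Rightarrow> nat set \<Rightarrow> bool" where
  "gale_facet d n S \<longleftrightarrow> S \<subseteq> {1..n} \<and> card S = 2*d + 1 \<and>
     (\<forall>i j. i \<in> {1..n} - S \<longrightarrow> j \<in> {1..n} - S \<longrightarrow> i < j \<longrightarrow>
        even (card {k \<in> S. i < k \<and> k < j}))"

definition cyclic_boundary :: "nat \<Rightarrow> nat \<Rightarrow> nat set set" where
  "cyclic_boundary d n = {F. \<exists>S. gale_facet d n S \<and> F \<subseteq> S}"

definition deletion_step :: "nat set set \<Rightarrow> nat set set \<Rightarrow> bool" where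
  "deletion_step K L \<longleftrightarrow> simplicial_complex L \<and> L \<subseteq> K"

definition admissible_pair :: "nat set set \<Rightarrow> nat \<Rightarrow> nat \<Rightarrow> bool" where
  "admissible_pair K u v \<longleftrightarrow> u \<in> verts K \<and> v \<in> verts K \<and> u \<noteq> v \<and>
     \<not> (\<exists>k M. int k \<le> cdim K \<and> missing_face K k M \<and> u \<in> M \<and> v \<in> M)"

definition contract :: "nat set set \<Rightarrow> nat \<Rightarrow> nat \<Rightarrow> nat set set" where
  "contract K u v = {F \<in> K. u \<notin> F} \<union> {(F - {u}) \<union> {v} | F. F \<in> K \<and> u \<in> F}"

definition contraction_step :: "nat set set \<Rightarrow> nat set set \<Rightarrow> bool" where
  "contraction_step K L \<longleftrightarrow> (\<exists>u v. admissible_pair K u v \<and> L = contract K u v)"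

inductive minor_steps :: "nat set set \<Rightarrow> nat set set \<Rightarrow> bool" where
  refl: "minor_steps K K"
| del: "minor_steps K L \<Longrightarrow> deletion_step L L' \<Longrightarrow> minor_steps K L'"
| con: "minor_steps K L \<Longrightarrow> contraction_step L L' \<Longrightarrow> minor_steps K L'"

definition iso_complex :: "nat set set \<Rightarrow> nat set set \<Rightarrow> bool" where
  "iso_complex K L \<longleftrightarrow> (\<exists>f. inj_on f (verts K) \<and> (`) f ` K = L)"

definition is_minor :: "nat set set \<Rightarrow> nat set set \<Rightarrow> bool" where
  "is_minor L K \<longleftrightarrow> (\<exists>L'. minor_steps K L' \<and> iso_complex L' L)"

end

theory Submission
  imports Defs
begin

text \<open>A missing d-face M of the cyclic polytope avoids 1 and n and contains no two consecutive
  integers, so B = {1} \<union> M \<union> (M + 1) has 2d + 3 elements. Contract the vertices outside B one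
  at a time, each onto its predecessor among the remaining vertices; the composite map rounds x
  down to the largest element of B below it. Each contraction is admissible: a candidate missing
  face through u and its predecessor is the image of a set of size at most d + 1 containing the
  consecutive pair u - 1, u, and by Gale's evenness condition such sets are faces. Finally every
  subset of B of size at most d + 1 is the image of a face of the d-skeleton or of M itself, so
  deleting everything else leaves the d-skeleton of the simplex on B.\<close>

definition has_consecutive :: "nat set \<Rightarrow> bool" where
  "has_consecutive F \<longleftrightarrow> (\<exists>a\<in>F. Suc a \<in> F)"

definition consecutive_pairs :: "nat set \<Rightarrow> nat set" where
  "consecutive_pairs A = (\<Union>a\<in>A. {a, Suc a})"

lemma finite_consecutive_pairs [simp]: "finite A \<Longrightarrow> finite (consecutive_pairs A)"
  by (simp add: consecutive_pairs_def)

lemma card_ge_2_if_has_consecutive: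
  assumes "finite F" "has_consecutive F"
  shows "2 \<le> card F"
proof -
  obtain a where "a \<in> F" "Suc a \<in> F" using assms(2) by (auto simp: has_consecutive_def)
  then have "card {a, Suc a} \<le> card F" using assms(1) by (intro card_mono) auto
  then show ?thesis by simp
qed

lemma card_consecutive_pairs:
  assumes "finite A" "\<not> has_consecutive A"
  shows "card (consecutive_pairs A) = 2 * card A"
proof -
  have "card (consecutive_pairs A) = (\<Sum>a\<in>A. card {a, Suc a})"
    unfolding consecutive_pairs_def
    using assms by (intro card_UN_disjoint) (auto simp: has_consecutive_def)
  then show ?thesis by simp
qed

lemma consecutive_pairs_remove_top:
  assumes "F \<subseteq> {l..n}" "n \<in> F"
    and "card F \<le> Suc d \<or> card F \<le> Suc d + 1 \<and> has_consecutive F"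
  shows "card (F - {n - 1, n}) \<le> d \<or> card (F - {n - 1, n}) \<le> d + 1 \<and> has_consecutive (F - {n - 1, n})"
proof -
  have fin: "finite F" using assms(1) finite_subset by blast
  show ?thesis
  proof (cases "n - 1 \<in> F \<and> n - 1 \<noteq> n")
    case True
    then have "card (F - {n - 1, n}) = card F - 2" using fin assms(2) by (simp add: card_Diff_subset)
    then show ?thesis using assms(3) by auto
  next
    case False
    then have eq: "F - {n - 1, n} = F - {n}" by auto
    then have card: "card (F - {n - 1, n}) = card F - 1" using fin assms(2) by simp
    have "has_consecutive (F - {n - 1, n})" if cons: "has_consecutive F"
    proof -
      obtain a where a: "a \<in> F" "Suc a \<in> F" using cons by (auto simp: has_consecutive_def)
      then have "a \<noteq> n" "Suc a \<noteq> n" using assms(1) False by auto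
      then show ?thesis using a eq by (auto simp: has_consecutive_def)
    qed
    then show ?thesis using assms(3) card by auto
  qed
qed

text \<open>Greedily from the top: either n is covered by the pair {n - 1, n}, or n is dropped.
  The last alternative of the hypothesis says that {l..n} has exactly 2d elements.\<close>

lemma consecutive_pairs_cover:
  assumes "1 \<le> l" "2 * d + l \<le> n + 1" "F \<subseteq> {l..n}"
    and "card F \<le> d \<or> card F \<le> d + 1 \<and> has_consecutive F \<or> n + 1 = 2 * d + l"
  shows "\<exists>A \<subseteq> {l..<n}. card A = d \<and> \<not> has_consecutive A \<and> F \<subseteq> consecutive_pairs A"
  using assms
proof (induction n arbitrary: d F rule: less_induct)
  case (less n)
  have fin: "finite F" using less.prems(3) finite_subset by blast
  show ?case
  proof (cases d)
    case 0
    then have "F = {}"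
      using less.prems card_ge_2_if_has_consecutive[OF fin] fin by fastforce
    then show ?thesis using 0 by (auto simp: has_consecutive_def)
  next
    case (Suc d')
    show ?thesis
    proof (cases "n \<in> F \<or> n + 1 = 2 * d + l")
      case True
      define F' where "F' = F - {n - 1, n}"
      have "card F' \<le> d' \<or> card F' \<le> d' + 1 \<and> has_consecutive F' \<or> n - 2 + 1 = 2 * d' + l"
      proof (cases "n + 1 = 2 * d + l")
        case False
        then show ?thesis
          using consecutive_pairs_remove_top[OF less.prems(3), of d'] less.prems(4) True Suc
          unfolding F'_def by auto
      qed (use Suc less.prems(1) in simp)
      moreover have "F' \<subseteq> {l..n - 2}" using less.prems(3) unfolding F'_def by force
      ultimately obtain A where A: "A \<subseteq> {l..<n - 2}" "card A = d'" "\<not> has_consecutive A"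
          "F' \<subseteq> consecutive_pairs A"
        using less.IH[of "n - 2" d' F'] less.prems(1,2) Suc by fastforce
      have A_range: "\<forall>a\<in>A. l \<le> a \<and> a < n - 2" using A(1) by auto
      then have top: "n - 1 \<notin> A" "Suc (n - 1) = n" "\<forall>a\<in>A. Suc a < n - 1"
        using less.prems(2) Suc by auto
      show ?thesis
      proof (intro exI[of _ "insert (n - 1) A"] conjI)
        show "insert (n - 1) A \<subseteq> {l..<n}" using A_range less.prems(2) Suc by auto
        show "card (insert (n - 1) A) = d" using A(1,2) top(1) Suc by (simp add: finite_subset)
        show "\<not> has_consecutive (insert (n - 1) A)"
          using A(3) top by (auto simp: has_consecutive_def)
        show "F \<subseteq> consecutive_pairs (insert (n - 1) A)"
          using A(4) top(2) unfolding F'_def consecutive_pairs_def by auto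
      qed
    next
      case False
      have "F \<subseteq> {l..n - 1}"
      proof
        fix x assume x: "x \<in> F"
        then have "x \<in> {l..n}" "x \<noteq> n" using less.prems(3) False by auto
        then show "x \<in> {l..n - 1}" by auto
      qed
      then obtain A where "A \<subseteq> {l..<n - 1}" "card A = d" "\<not> has_consecutive A"
          "F \<subseteq> consecutive_pairs A"
        using less.IH[of "n - 1" d F] less.prems False by fastforce
      moreover have "{l..<n - 1} \<subseteq> {l..<n}" by auto
      ultimately show ?thesis by blast
    qed
  qed
qed

lemma gale_facet_insert_consecutive_pairs:
  assumes "finite A" "\<not> has_consecutive A" "card A = d"
    and "insert e (consecutive_pairs A) \<subseteq> {1..n}" "e \<notin> consecutive_pairs A" "e = 1 \<or> e = n"
  shows "gale_facet d n (insert e (consecutive_pairs A))"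
  unfolding gale_facet_def
proof (intro conjI allI impI)
  show "card (insert e (consecutive_pairs A)) = 2 * d + 1"
    using assms card_consecutive_pairs by simp
next
  fix i j
  assume i: "i \<in> {1..n} - insert e (consecutive_pairs A)"
    and j: "j \<in> {1..n} - insert e (consecutive_pairs A)" and "i < j"
  let ?A = "{a \<in> A. i < a \<and> a < j}"
  have "{k \<in> insert e (consecutive_pairs A). i < k \<and> k < j} = consecutive_pairs ?A"
    using i j assms(6) by (auto simp: consecutive_pairs_def less_Suc_eq)
  moreover have "card (consecutive_pairs ?A) = 2 * card ?A"
    using assms(1,2) by (intro card_consecutive_pairs) (auto simp: has_consecutive_def)
  ultimately show "even (card {k \<in> insert e (consecutive_pairs A). i < k \<and> k < j})" by simp
qed (use assms(4) in blast)

lemma consecutive_pairs_subset: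
  assumes "A \<subseteq> {l..<m}" shows "consecutive_pairs A \<subseteq> {l..m}"
  using assms by (auto simp: consecutive_pairs_def)

lemma in_cyclic_boundaryI:
  assumes n: "2 * d + 1 \<le> n" and F: "F \<subseteq> {1..n}" "card F \<le> d + 1"
    and "card F \<le> d \<or> 1 \<in> F \<or> n \<in> F \<or> has_consecutive F"
  shows "F \<in> cyclic_boundary d n"
proof -
  have fin: "finite F" using F(1) finite_subset by blast
  obtain e A where A: "A \<subseteq> {1..<n}" "card A = d" "\<not> has_consecutive A"
      and e: "e = 1 \<or> e = n" "insert e (consecutive_pairs A) \<subseteq> {1..n}" "e \<notin> consecutive_pairs A"
      and cover: "F \<subseteq> insert e (consecutive_pairs A)"
  proof (cases "n \<in> F")
    case True
    have "F - {n} \<subseteq> {1..n - 1}" using F(1) by (auto simp: subset_iff)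
    moreover have "card (F - {n}) \<le> d" using True fin F(2) by simp
    ultimately obtain A where A: "A \<subseteq> {1..<n - 1}" "card A = d" "\<not> has_consecutive A"
        "F - {n} \<subseteq> consecutive_pairs A"
      using consecutive_pairs_cover[of 1 d "n - 1" "F - {n}"] n by auto
    have "consecutive_pairs A \<subseteq> {1..n - 1}" using A(1) by (rule consecutive_pairs_subset)
    then show thesis using A n by (intro that[of A n]) (auto simp: subset_iff)
  next
    case False
    have "F - {1} \<subseteq> {2..n}" using F(1) by (auto simp: subset_iff)
    moreover have "card (F - {1}) \<le> d \<or> card (F - {1}) \<le> d + 1 \<and> has_consecutive (F - {1}) \<or> n + 1 = 2 * d + 2"
      using assms(4) False F(2) fin by (cases "1 \<in> F") auto
    ultimately obtain A where A: "A \<subseteq> {2..<n}" "card A = d" "\<not> has_consecutive A"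
        "F - {1} \<subseteq> consecutive_pairs A"
      using consecutive_pairs_cover[of 2 d n "F - {1}"] n by auto
    have "consecutive_pairs A \<subseteq> {2..n}" using A(1) by (rule consecutive_pairs_subset)
    then show thesis using A n by (intro that[of A 1]) (auto simp: subset_iff)
  qed
  moreover have "finite A" using A(1) finite_subset by blast
  ultimately have "gale_facet d n (insert e (consecutive_pairs A))"
    by (intro gale_facet_insert_consecutive_pairs)
  then show ?thesis using cover unfolding cyclic_boundary_def by blast
qed

lemma cyclic_boundary_subset: "F \<in> cyclic_boundary d n \<Longrightarrow> F \<subseteq> {1..n}"
  unfolding cyclic_boundary_def gale_facet_def by blast

lemma missing_face_cyclic_boundaryD:
  assumes n: "2 * d + 1 \<le> n" and M: "missing_face (cyclic_boundary d n) d M"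
  shows "M \<subseteq> {1..n}" "card M = d + 1" "1 \<notin> M" "n \<notin> M" "\<not> has_consecutive M"
proof -
  have "verts (cyclic_boundary d n) \<subseteq> {1..n}"
    unfolding verts_def using cyclic_boundary_subset by (rule Union_least)
  then show Mn: "M \<subseteq> {1..n}" using M unfolding missing_face_def by blast
  show cM: "card M = d + 1" using M unfolding missing_face_def by blast
  have "M \<notin> cyclic_boundary d n" using M unfolding missing_face_def by blast
  moreover have "1 \<in> M \<or> n \<in> M \<or> has_consecutive M \<Longrightarrow> M \<in> cyclic_boundary d n"
    using in_cyclic_boundaryI[OF n Mn] cM by simp
  ultimately show "1 \<notin> M" "n \<notin> M" "\<not> has_consecutive M" by blast+
qed

lemma insert_one_consecutive_pairs_subset:
  assumes "1 \<le> n" "M \<subseteq> {1..n}" "n \<notin> M"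
  shows "insert 1 (consecutive_pairs M) \<subseteq> {1..n}"
proof -
  have "Suc m \<in> {1..n}" if "m \<in> M" for m
  proof -
    have "m \<in> {1..n}" "m \<noteq> n" using assms(2,3) that by auto
    then show ?thesis by simp
  qed
  then show ?thesis using assms(1,2) unfolding consecutive_pairs_def by auto
qed

lemma card_insert_one_consecutive_pairs:
  assumes "finite M" "0 \<notin> M" "1 \<notin> M" "\<not> has_consecutive M"
  shows "card (insert 1 (consecutive_pairs M)) = 2 * card M + 1"
proof -
  have "1 \<notin> consecutive_pairs M" using assms(2,3) unfolding consecutive_pairs_def by force
  then show ?thesis using card_consecutive_pairs[OF assms(1,4)] assms(1) by simp
qed

text \<open>round_down V x is junk (the maximum of the empty set) unless some element of V is at most x;
  below V always contains 1 and x \<ge> 1.\<close>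

definition round_down :: "nat set \<Rightarrow> nat \<Rightarrow> nat" where
  "round_down V x = Max {w \<in> V. w \<le> x}"

lemma round_down_eqI:
  assumes "finite V" "y \<in> V" "y \<le> x" "\<forall>w\<in>V. y < w \<longrightarrow> x < w"
  shows "round_down V x = y"
  unfolding round_down_def
  using assms by (intro Max_eqI) (auto simp: not_less[symmetric])

lemma round_down_id: "finite V \<Longrightarrow> x \<in> V \<Longrightarrow> round_down V x = x"
  by (rule round_down_eqI) simp_all

lemma round_down_image_id: "finite V \<Longrightarrow> H \<subseteq> V \<Longrightarrow> round_down V ` H = H"
  by (auto simp: round_down_id subset_iff image_iff)

lemma round_down_greatest:
  assumes "finite V" "1 \<in> V" "1 \<le> x"
  shows "round_down V x \<in> V" "round_down V x \<le> x" "\<And>w. w \<in> V \<Longrightarrow> w \<le> x \<Longrightarrow> w \<le> round_down V x"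
proof -
  have "finite {w \<in> V. w \<le> x}" "{w \<in> V. w \<le> x} \<noteq> {}" using assms by auto
  from Max_in[OF this] show "round_down V x \<in> V" "round_down V x \<le> x"
    unfolding round_down_def by simp_all
  show "w \<le> round_down V x" if "w \<in> V" "w \<le> x" for w
    unfolding round_down_def using assms that by (intro Max_ge) auto
qed

lemma round_down_remove:
  assumes "finite V" "1 \<in> V" "u \<in> V" "1 < u" "1 \<le> x"
  shows "round_down (V - {u}) x
           = (if round_down V x = u then round_down V (u - 1) else round_down V x)"
proof -
  let ?p = "round_down V x" and ?v = "round_down V (u - 1)"
  have p: "?p \<in> V" "?p \<le> x" "\<And>w. w \<in> V \<Longrightarrow> w \<le> x \<Longrightarrow> w \<le> ?p"
    using round_down_greatest[OF assms(1,2,5)] by blast+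
  have v: "?v \<in> V" "?v < u" "\<And>w. w \<in> V \<Longrightarrow> w < u \<Longrightarrow> w \<le> ?v"
    using round_down_greatest[OF assms(1,2), of "u - 1"] assms(4) by fastforce+
  show ?thesis
  proof (cases "?p = u")
    case True
    have "x < w" if "w \<in> V - {u}" "?v < w" for w
    proof (rule ccontr)
      assume "\<not> x < w"
      then have "w < u" using p(3) True that(1) by fastforce
      then show False using v(3) that by fastforce
    qed
    then have "round_down (V - {u}) x = ?v"
      using assms(1) v p True by (intro round_down_eqI) auto
    then show ?thesis using True by simp
  next
    case False
    have "round_down (V - {u}) x = ?p"
      using assms(1) p False by (intro round_down_eqI) (auto simp flip: not_le)
    then show ?thesis using False by simp
  qed
qed

lemma contract_eq_image:
  "contract K u v = (\<lambda>F. (\<lambda>x. if x = u then v else x) ` F) ` K"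
proof -
  have "(\<lambda>x. if x = u then v else x) ` F = (if u \<in> F then (F - {u}) \<union> {v} else F)" for F
    by (auto simp: image_iff)
  then show ?thesis unfolding contract_def by (auto simp: image_iff)
qed

definition round_down_complex :: "nat set \<Rightarrow> nat set set \<Rightarrow> nat set set" where
  "round_down_complex V K = (`) (round_down V) ` K"

locale consecutive_closed_family =
  fixes K :: "nat set set" and n d :: nat
  assumes faces_subset: "\<And>F. F \<in> K \<Longrightarrow> F \<subseteq> {1..n}"
    and card_faces: "\<And>F. F \<in> K \<Longrightarrow> card F \<le> d + 1"
    and d_pos: "1 \<le> d"
    and consecutive_faces:
      "\<And>F. F \<subseteq> {1..n} \<Longrightarrow> card F \<le> d + 1 \<Longrightarrow> card F \<le> d \<or> has_consecutive F \<Longrightarrow> F \<in> K"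
begin

lemma finite_K: "finite K"
  using faces_subset by (intro finite_subset[of K "Pow {1..n}"]) auto

lemma singleton_mem_round_down_complex:
  assumes "V \<subseteq> {1..n}" "x \<in> V"
  shows "{x} \<in> round_down_complex V K"
proof -
  have "{x} \<in> K" using assms d_pos by (intro consecutive_faces) auto
  moreover have "finite V" using assms(1) finite_subset by blast
  ultimately show ?thesis
    unfolding round_down_complex_def using assms(2) by (force simp: round_down_id)
qed

lemma round_down_complex_faces:
  assumes "V \<subseteq> {1..n}" "1 \<in> V" "G \<in> round_down_complex V K"
  shows "G \<subseteq> V" "card G \<le> d + 1"
proof -
  obtain F where F: "F \<in> K" "G = round_down V ` F"
    using assms(3) unfolding round_down_complex_def by blast
  have "finite V" using assms(1) finite_subset by blast
  then show "G \<subseteq> V"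
    using F faces_subset assms(2) round_down_greatest(1) by fastforce
  have "finite F" using faces_subset[OF F(1)] finite_subset by blast
  then show "card G \<le> d + 1" using F card_faces card_image_le le_trans by blast
qed

lemma cdim_round_down_complex:
  assumes "V \<subseteq> {1..n}" "1 \<in> V"
  shows "cdim (round_down_complex V K) \<le> int d"
proof -
  let ?L = "round_down_complex V K"
  have "finite ?L" using finite_K unfolding round_down_complex_def by simp
  moreover have "?L \<noteq> {}" using singleton_mem_round_down_complex[OF assms] by blast
  ultimately have "Max (card ` ?L) \<le> d + 1"
    using round_down_complex_faces[OF assms] by auto
  then show ?thesis unfolding cdim_def by simp
qed

lemma admissible_pair_round_down_complex:
  assumes V: "V \<subseteq> {1..n}" "1 \<in> V" and u: "u \<in> V" "1 < u"
  shows "admissible_pair (round_down_complex V K) u (round_down V (u - 1))"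
proof -
  let ?L = "round_down_complex V K" and ?v = "round_down V (u - 1)"
  have fin: "finite V" using V(1) finite_subset by blast
  have v: "?v \<in> V" "?v < u" "\<And>w. w \<in> V \<Longrightarrow> w < u \<Longrightarrow> w \<le> ?v"
    using round_down_greatest[OF fin V(2), of "u - 1"] u(2) by fastforce+
  have no_missing: False if S: "missing_face ?L k S" "int k \<le> cdim ?L" "u \<in> S" "?v \<in> S" for k S
  proof -
    have "S \<subseteq> verts ?L" "card S = k + 1" "S \<notin> ?L" using S(1) unfolding missing_face_def by auto
    moreover have "verts ?L \<subseteq> V"
      using round_down_complex_faces(1)[OF V] unfolding verts_def by blast
    ultimately have SV: "S \<subseteq> V" and cS: "card S \<le> d + 1" and SL: "S \<notin> ?L"
      using S(2) cdim_round_down_complex[OF V] by auto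
    define F where "F = insert (u - 1) (S - {?v})"
    have fS: "finite S" using SV fin finite_subset by blast
    have "card F \<le> Suc (card (S - {?v}))" unfolding F_def using fS by (simp add: card_insert_if)
    also have "\<dots> = card S" using card_Suc_Diff1[OF fS S(4)] .
    finally have "card F \<le> d + 1" using cS by simp
    moreover have "F \<subseteq> {1..n}" using SV V(1) u unfolding F_def by force
    moreover have "has_consecutive F"
      unfolding F_def has_consecutive_def using S(3) v(2) u(2) by force
    ultimately have "F \<in> K" using consecutive_faces by blast
    moreover have "round_down V ` F = S"
      unfolding F_def using round_down_image_id[OF fin, of "S - {?v}"] SV S(4) by auto
    ultimately have "S \<in> ?L" unfolding round_down_complex_def by blast
    then show False using SL by contradiction
  qed
  have "u \<in> verts ?L" "?v \<in> verts ?L"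
    using singleton_mem_round_down_complex[OF V(1)] u(1) v(1) unfolding verts_def by blast+
  then show ?thesis unfolding admissible_pair_def using v(2) no_missing by force
qed

lemma contraction_step_round_down_complex:
  assumes V: "V \<subseteq> {1..n}" "1 \<in> V" and u: "u \<in> V" "1 < u"
  shows "contraction_step (round_down_complex V K) (round_down_complex (V - {u}) K)"
proof -
  let ?v = "round_down V (u - 1)"
  have fin: "finite V" using V(1) finite_subset by blast
  have "contract (round_down_complex V K) u ?v = round_down_complex (V - {u}) K"
    unfolding contract_eq_image round_down_complex_def image_image
  proof ((rule image_cong[OF HOL.refl])+)
    fix F x assume "F \<in> K" "x \<in> F"
    then have "1 \<le> x" using faces_subset by fastforce
    then show "(if round_down V x = u then ?v else round_down V x) = round_down (V - {u}) x"
      using round_down_remove[OF fin V(2) u] by simp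
  qed
  then show ?thesis
    unfolding contraction_step_def using admissible_pair_round_down_complex[OF V u] by blast
qed

lemma minor_steps_round_down_complex:
  assumes "V \<subseteq> {1..n}" "1 \<in> V"
  shows "minor_steps K (round_down_complex V K)"
proof -
  have "minor_steps K (round_down_complex ({1..n} - D) K)" if "finite D" "D \<subseteq> {2..n}" for D
    using that
  proof (induction D rule: finite_induct)
    case empty
    have "round_down_complex {1..n} K = K"
      unfolding round_down_complex_def using faces_subset
      by (simp add: round_down_image_id cong: image_cong)
    then show ?case by (simp add: minor_steps.refl)
  next
    case (insert u D)
    have "contraction_step (round_down_complex ({1..n} - D) K) (round_down_complex ({1..n} - D - {u}) K)"
      using insert.hyps(2) insert.prems by (intro contraction_step_round_down_complex) auto
    moreover have "{1..n} - D - {u} = {1..n} - insert u D" by auto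
    ultimately show ?case using minor_steps.con insert by auto
  qed
  moreover have "{1..n} - V \<subseteq> {2..n}"
  proof
    fix x assume "x \<in> {1..n} - V"
    then have "1 \<le> x" "x \<noteq> 1" "x \<le> n" using assms(2) by auto
    then show "x \<in> {2..n}" by simp
  qed
  ultimately have "minor_steps K (round_down_complex ({1..n} - ({1..n} - V)) K)" by simp
  moreover have "{1..n} - ({1..n} - V) = V" using assms(1) by auto
  ultimately show ?thesis by simp
qed

end

lemma consecutive_pairs_choice:
  assumes M: "finite M" "\<not> has_consecutive M"
    and G: "G \<subseteq> consecutive_pairs M" "\<not> has_consecutive G" "card G = card M"
    and "m \<in> M"
  shows "m \<in> G \<or> Suc m \<in> G"
proof -
  define h where "h x = (if x \<in> M then x else x - 1)" for x
  have G_cases: "x \<in> M \<or> (x - 1 \<in> M \<and> x = Suc (x - 1))" if "x \<in> G" for x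
    using G(1) that unfolding consecutive_pairs_def by auto
  have "inj_on h G"
  proof
    fix x y assume xy: "x \<in> G" "y \<in> G" "h x = h y"
    show "x = y"
      using G_cases[OF xy(1)] G_cases[OF xy(2)] xy G(2) unfolding h_def has_consecutive_def
      by (auto split: if_splits)
  qed
  moreover have "h ` G \<subseteq> M" using G_cases unfolding h_def by auto
  ultimately have "h ` G = M" using M(1) G(3) by (simp add: card_image card_subset_eq)
  then obtain x where "x \<in> G" "h x = m" using assms(6) by blast
  then show ?thesis using G_cases unfolding h_def by (metis)
qed

lemma round_down_insert_image:
  assumes "finite B" "G \<subseteq> B" "b \<in> G" "round_down B x = b"
  shows "round_down B ` insert x (G - {b}) = G"
  using assms round_down_image_id[OF assms(1), of "G - {b}"] by auto

text \<open>Take b = m0 + 1 for the largest m0 \<in> M with m0 + 1 \<in> G. The point x is n if b is the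
  top of B, and otherwise c - 1 for the next element c of B; maximality of m0 forces c \<in> G.\<close>

lemma round_down_preimage_point:
  assumes M: "finite M" "\<not> has_consecutive M"
    and B: "B = insert 1 (consecutive_pairs M)" "B \<subseteq> {1..n}"
    and G: "G \<subseteq> consecutive_pairs M" "\<not> has_consecutive G" "card G = card M" "\<not> G \<subseteq> M"
  obtains b x where "b \<in> G" "x \<in> {1..n}" "round_down B x = b" "x = n \<or> Suc x \<in> G - {b}"
proof -
  let ?Y = "{m \<in> M. Suc m \<in> G}"
  have "?Y \<noteq> {}" using G(1,4) unfolding consecutive_pairs_def by blast
  then have m0: "Max ?Y \<in> M" "Suc (Max ?Y) \<in> G" and m0_max: "\<And>m. m \<in> M \<Longrightarrow> Suc m \<in> G \<Longrightarrow> m \<le> Max ?Y"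
    using Max_in[of ?Y] M(1) by auto
  define b where "b = Suc (Max ?Y)"
  have b: "b \<in> G" "b \<in> B" "b \<notin> M"
    using m0 M(2) unfolding b_def B(1) has_consecutive_def consecutive_pairs_def by auto
  have fin: "finite B" using B(2) finite_subset by blast
  show thesis
  proof (cases "\<exists>w\<in>B. b < w")
    case False
    have "round_down B n = b" using fin b(2) B(2) False by (intro round_down_eqI) auto
    moreover have "b \<in> {1..n}" using b(2) B(2) by blast
    ultimately show thesis using that[of b n] b(1) by auto
  next
    case True
    define c where "c = Min {w \<in> B. b < w}"
    have "finite {w \<in> B. b < w}" "{w \<in> B. b < w} \<noteq> {}" using fin True by auto
    then have c: "c \<in> B" "b < c" and c_min: "\<And>w. w \<in> B \<Longrightarrow> b < w \<Longrightarrow> c \<le> w"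
      unfolding c_def using Min_in Min_le by fastforce+
    have "c \<in> M"
    proof (rule ccontr)
      assume "c \<notin> M"
      then obtain m where m: "m \<in> M" "c = Suc m"
        using c unfolding B(1) b_def consecutive_pairs_def by auto
      then have "m \<in> B" "b < m" using b(3) c(2) unfolding B(1) consecutive_pairs_def
        by (auto simp: less_Suc_eq)
      then show False using c_min m(2) by fastforce
    qed
    moreover have "Suc c \<notin> G" using m0_max[OF \<open>c \<in> M\<close>] c(2) unfolding b_def by auto
    ultimately have "c \<in> G" using consecutive_pairs_choice[OF M G(1-3)] by blast
    have "round_down B (c - 1) = b" using fin b(2) c c_min by (intro round_down_eqI) fastforce+
    moreover have "c - 1 \<in> {1..n}" using c B(2) m0 unfolding b_def by auto
    ultimately show thesis using that[of b "c - 1"] b(1) \<open>c \<in> G\<close> c(2) by auto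
  qed
qed

lemma simplicial_complex_skeleton_Pow:
  assumes "finite B" shows "simplicial_complex (skeleton k (Pow B))"
  unfolding simplicial_complex_def skeleton_def
proof (intro conjI ballI allI impI)
  show "finite {F \<in> Pow B. card F \<le> k + 1}" using assms by simp
next
  fix F assume "F \<in> {F \<in> Pow B. card F \<le> k + 1}"
  then show "finite F" using assms finite_subset by blast
next
  fix F G assume F: "F \<in> {F \<in> Pow B. card F \<le> k + 1}" and "G \<subseteq> F"
  moreover have "finite F" using F assms finite_subset by blast
  ultimately show "G \<in> {F \<in> Pow B. card F \<le> k + 1}" using card_mono[of F G] by auto
qed

lemma iso_complex_skeleton_Pow:
  assumes "finite B" "finite C" "card B = card C"
  shows "iso_complex (skeleton k (Pow B)) (skeleton k (Pow C))"
proof -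
  obtain f where "bij_betw f B C" using finite_same_card_bij[OF assms] ..
  then have inj: "inj_on f B" and img: "f ` B = C" unfolding bij_betw_def by blast+
  have card_eq: "card (f ` G) = card G" if "G \<subseteq> B" for G
    using card_image[OF inj_on_subset[OF inj that]] .
  have "(`) f ` skeleton k (Pow B) = skeleton k (Pow C)"
  proof (intro equalityI subsetI)
    fix H assume "H \<in> (`) f ` skeleton k (Pow B)"
    then obtain G where G: "G \<subseteq> B" "card G \<le> k + 1" "H = f ` G" unfolding skeleton_def by blast
    have "H \<subseteq> C" using G(1,3) img by blast
    moreover have "card H \<le> k + 1" using card_eq[OF G(1)] G(2,3) by simp
    ultimately show "H \<in> skeleton k (Pow C)" unfolding skeleton_def by simp
  next
    fix H assume H: "H \<in> skeleton k (Pow C)"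
    then have "H \<subseteq> f ` B" using img unfolding skeleton_def by blast
    then obtain G where G: "G \<subseteq> B" "H = f ` G" by (auto simp: subset_image_iff)
    moreover have "card G \<le> k + 1" using card_eq[OF G(1)] G(2) H unfolding skeleton_def by simp
    ultimately show "H \<in> (`) f ` skeleton k (Pow B)" unfolding skeleton_def by blast
  qed
  moreover have "inj_on f (verts (skeleton k (Pow B)))"
    using inj by (rule inj_on_subset) (auto simp: verts_def skeleton_def)
  ultimately show ?thesis unfolding iso_complex_def by blast
qed

lemma consecutive_closed_family_cyclic_skeleton:
  assumes "1 \<le> d" "2 * d + 1 \<le> n" "M \<subseteq> {1..n}" "card M = d + 1"
  shows "consecutive_closed_family (skeleton d (cyclic_boundary d n) \<union> {M}) n d"
proof
  fix F assume "F \<in> skeleton d (cyclic_boundary d n) \<union> {M}"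
  then have "F \<in> cyclic_boundary d n \<and> card F \<le> d + 1 \<or> F = M" unfolding skeleton_def by blast
  then show "F \<subseteq> {1..n}" "card F \<le> d + 1" using assms(3,4) cyclic_boundary_subset[of F d n] by auto
next
  fix F assume "F \<subseteq> {1..n}" "card F \<le> d + 1" "card F \<le> d \<or> has_consecutive F"
  then show "F \<in> skeleton d (cyclic_boundary d n) \<union> {M}"
    using in_cyclic_boundaryI[OF assms(2)] unfolding skeleton_def by blast
qed (fact assms(1))

lemma skeleton_Pow_subset_round_down_complex:
  assumes n: "2 * d + 1 \<le> n"
    and M: "M \<subseteq> {1..n}" "card M = d + 1" "\<not> has_consecutive M"
    and B: "B = insert 1 (consecutive_pairs M)" "B \<subseteq> {1..n}"
  shows "skeleton d (Pow B) \<subseteq> round_down_complex B (skeleton d (cyclic_boundary d n) \<union> {M})"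
proof
  let ?K = "skeleton d (cyclic_boundary d n) \<union> {M}"
  fix G assume "G \<in> skeleton d (Pow B)"
  then have G: "G \<subseteq> B" "card G \<le> d + 1" unfolding skeleton_def by auto
  have fin: "finite B" "finite M" using B(2) M(1) finite_subset by blast+
  have in_K: "F \<in> ?K" if "F \<subseteq> {1..n}" "card F \<le> d + 1"
    "card F \<le> d \<or> 1 \<in> F \<or> n \<in> F \<or> has_consecutive F" for F
    using in_cyclic_boundaryI[OF n that] that(2) unfolding skeleton_def by blast
  have image_in: "G \<in> round_down_complex B ?K" if "F \<in> ?K" "round_down B ` F = G" for F
    using that unfolding round_down_complex_def by blast
  show "G \<in> round_down_complex B ?K"
  proof (cases "G = M \<or> card G \<le> d \<or> 1 \<in> G \<or> has_consecutive G")
    case True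
    then have "G \<in> ?K" using in_K G B(2) by blast
    then show ?thesis using image_in round_down_image_id[OF fin(1) G(1)] by blast
  next
    case False
    then have "G \<subseteq> consecutive_pairs M" "\<not> has_consecutive G" "card G = card M"
      using G B(1) M(2) by auto
    moreover have "\<not> G \<subseteq> M" using False calculation(3) card_subset_eq[OF fin(2)] by blast
    ultimately obtain b x where bx: "b \<in> G" "x \<in> {1..n}" "round_down B x = b" "x = n \<or> Suc x \<in> G - {b}"
      using round_down_preimage_point[OF fin(2) M(3) B] by blast
    define F where "F = insert x (G - {b})"
    have "card F \<le> Suc (card (G - {b}))" unfolding F_def using G(1) fin(1)
      by (simp add: card_insert_if finite_subset)
    also have "\<dots> = card G" using card_Suc_Diff1[OF finite_subset[OF G(1) fin(1)] bx(1)] .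
    finally have "F \<in> ?K"
      using in_K[of F] G B(2) bx(2,4) unfolding F_def has_consecutive_def by auto
    then show ?thesis
      using image_in round_down_insert_image[OF fin(1) G(1) bx(1,3)] unfolding F_def by blast
  qed
qed

theorem lemma2p13:
  fixes d n :: nat and M :: "nat set"
  assumes "d \<ge> 1" and "n \<ge> 2*d + 3"
    and "missing_face (cyclic_boundary d n) d M"
  shows "is_minor (skeleton d (simplex (2*d + 2)))
                  (skeleton d (cyclic_boundary d n) \<union> {M})"
proof -
  let ?K = "skeleton d (cyclic_boundary d n) \<union> {M}"
  define B where "B = insert 1 (consecutive_pairs M)"
  have n: "2 * d + 1 \<le> n" using assms(2) by simp
  note M = missing_face_cyclic_boundaryD[OF n assms(3)]
  have "finite M" "0 \<notin> M" using M(1) finite_subset by auto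
  then have B: "B \<subseteq> {1..n}" "card B = 2 * d + 3" "1 \<in> B"
    using insert_one_consecutive_pairs_subset[OF _ M(1,4)] card_insert_one_consecutive_pairs M(2,3,5) n
    unfolding B_def by auto
  interpret consecutive_closed_family ?K n d
    using consecutive_closed_family_cyclic_skeleton[OF assms(1) n M(1,2)] .
  have "minor_steps ?K (round_down_complex B ?K)"
    using minor_steps_round_down_complex B(1,3) .
  then have "minor_steps ?K (skeleton d (Pow B))"
    using minor_steps.del simplicial_complex_skeleton_Pow[of B]
      skeleton_Pow_subset_round_down_complex[OF n M(1,2,5) B_def B(1)] B(1) finite_subset
    unfolding deletion_step_def by blast
  moreover have "iso_complex (skeleton d (Pow B)) (skeleton d (simplex (2 * d + 2)))"
    unfolding simplex_def using B by (intro iso_complex_skeleton_Pow) (auto intro: finite_subset)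
  ultimately show ?thesis unfolding is_minor_def by blast
qed

end
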